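(* Let $\mathbb{S}\in\mathbb{Z}^{N_X\times N_e}$, $\mathcal{X}=\mathbb{R}^{N_X}_{>0}$, $\Phi$ a primal thermodynamic function on $\mathcal{X}$, $\tilde{x}\in\mathcal{X}$, and $\{\Psi^*_x\}_{x\in\mathcal{X}}$ a family of dissipation functions on $\mathbb{R}^{N_e}$ with conjugates $\Psi_x$. Let $x_t$ be a trajectory in $\mathcal{X}$ of the equilibrium flow $\dot{x}=-\mathbb{S}\,j(x)$ with force $f(x):=\mathbb{S}^T(\nabla\Phi(x)-\nabla\Phi(\tilde{x}))$, flux $j(x):=\nabla\Psi^*_x(f(x))$, and $x(0)=x_0$. Then for every $t\ge0$, $$\mathcal{D}_\Phi[x_0\|\tilde{x}]-\mathcal{D}_\Phi[x_t\|\tilde{x}]=\int_0^t\Big[\Psi^*_{x_{t'}}\big(f(x_{t'})\big)+\Psi_{x_{t'}}\big(j(x_{t'})\big)\Big]dt'=\int_0^t\dot{\Sigma}_{t'}\,dt',$$ where $\dot{\Sigma}_{t'}:=\langle j(x_{t'}),f(x_{t'})\rangle$.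
   Context: A primal thermodynamic function is a strictly convex differentiable $\Phi:\mathcal{X}\to\mathbb{R}$ such that $\{\nabla\Phi(x):x\in\mathcal{X}\}=\mathbb{R}^{N_X}$ and, for every $x_{in}\in\mathcal{X}$ and $x_{bd}\in\mathbb{R}^{N_X}_{\ge0}\setminus\mathcal{X}$, $\lim_{\lambda\to0^+}\frac{d}{d\lambda}\Phi(\lambda x_{in}+(1-\lambda)x_{bd})=-\infty$. The Bregman divergence is $\mathcal{D}_\Phi[x\|x']=\Phi(x)-\Phi(x')-\langle x-x',\nabla\Phi(x')\rangle$. A dissipation function on $\mathbb{R}^{N_e}$ is a strictly convex, continuously differentiable, $1$-coercive, even function $\psi$ with $\psi(0)=0$; $\Psi_x(j):=\max_f[\langle j,f\rangle-\Psi^*_x(f)]$ is the Legendre–Fenchel conjugate of $\Psi^*_x$. *)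

theory Defs
  imports "HOL-Analysis.Analysis"
begin

definition grad :: "('a::euclidean_space \<Rightarrow> real) \<Rightarrow> 'a \<Rightarrow> 'a" where
  "grad f x = (THE D. GDERIV f x :> D)"

definition strictly_convex_on :: "'a::real_vector set \<Rightarrow> ('a \<Rightarrow> real) \<Rightarrow> bool" where
  "strictly_convex_on S f \<longleftrightarrow> convex S \<and>
     (\<forall>x\<in>S. \<forall>y\<in>S. \<forall>u::real. x \<noteq> y \<and> 0 < u \<and> u < 1 \<longrightarrow>
        f (u *\<^sub>R x + (1 - u) *\<^sub>R y) < u * f x + (1 - u) * f y)"

definition pos_orthant :: "(real ^ 'n) set" where
  "pos_orthant = {x. \<forall>i. 0 < x $ i}"

definition nonneg_orthant :: "(real ^ 'n) set" where
  "nonneg_orthant = {x. \<forall>i. 0 \<le> x $ i}"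

definition primal_thermo :: "(real ^ 'n) set \<Rightarrow> (real ^ 'n \<Rightarrow> real) \<Rightarrow> bool" where
  "primal_thermo X \<Phi> \<longleftrightarrow>
     strictly_convex_on X \<Phi> \<and>
     (\<forall>x\<in>X. \<Phi> differentiable (at x)) \<and>
     grad \<Phi> ` X = UNIV \<and>
     (\<forall>x_in\<in>X. \<forall>x_bd\<in>nonneg_orthant - X.
        filterlim (\<lambda>l. deriv (\<lambda>m. \<Phi> (m *\<^sub>R x_in + (1 - m) *\<^sub>R x_bd)) l) at_bot (at_right 0))"

definition bregman :: "(real ^ 'n \<Rightarrow> real) \<Rightarrow> real ^ 'n \<Rightarrow> real ^ 'n \<Rightarrow> real" where
  "bregman \<Phi> x x' = \<Phi> x - \<Phi> x' - (x - x') \<bullet> grad \<Phi> x'"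

definition dissipation :: "(real ^ 'e \<Rightarrow> real) \<Rightarrow> bool" where
  "dissipation \<psi> \<longleftrightarrow>
     strictly_convex_on UNIV \<psi> \<and>
     (\<forall>v. \<psi> differentiable (at v)) \<and> continuous_on UNIV (grad \<psi>) \<and>
     filterlim (\<lambda>v. \<psi> v / norm v) at_top at_infinity \<and>
     (\<forall>v. \<psi> (- v) = \<psi> v) \<and> \<psi> 0 = 0"

text \<open>Legendre--Fenchel conjugate (the sup is a max for dissipation functions).\<close>
definition lf_conj :: "(real ^ 'e \<Rightarrow> real) \<Rightarrow> real ^ 'e \<Rightarrow> real" where
  "lf_conj \<psi> j = (SUP f. j \<bullet> f - \<psi> f)"

end

theory Submission
  imports Defs
begin

text \<open>By the chain rule and \<open>x' = - S j\<close>, the Bregman divergence from \<open>xt\<close> decreases along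
  the flow at rate \<open>(S j) \<bullet> (\<nabla>\<Phi> x - \<nabla>\<Phi> xt) = j \<bullet> f\<close>, the entropy production; the
  fundamental theorem of calculus integrates this. Since \<open>j = \<nabla>\<Psi>\<^sup>*(f)\<close> with \<open>\<Psi>\<^sup>*\<close>
  convex, the Fenchel--Young inequality \<open>\<Psi>\<^sup>*(f) + \<Psi>(j) \<ge> j \<bullet> f\<close> is an equality, so both
  integrands coincide.\<close>

lemma grad_eqI:
  fixes F :: "'a::euclidean_space \<Rightarrow> real"
  assumes "(F has_derivative (\<lambda>h. h \<bullet> D)) (at x)"
  shows "grad F x = D"
  unfolding grad_def
proof (rule the_equality)
  show "GDERIV F x :> D" using assms by (simp add: gderiv_def)
next
  fix D' assume "GDERIV F x :> D'"
  then have "(\<lambda>h. h \<bullet> D') = (\<lambda>h. h \<bullet> D)"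
    using assms by (simp add: gderiv_def has_derivative_unique)
  then have "(D' - D) \<bullet> (D' - D) = 0" by (metis inner_diff_left inner_diff_right right_minus_eq)
  then show "D' = D" by simp
qed

lemma has_derivative_grad:
  fixes F :: "'a::euclidean_space \<Rightarrow> real"
  assumes "F differentiable (at x)"
  shows "(F has_derivative (\<lambda>h. h \<bullet> grad F x)) (at x)"
proof -
  obtain L where L: "(F has_derivative L) (at x)" using assms differentiable_def by blast
  define D where "D = adjoint L 1"
  have "L = (\<lambda>h. h \<bullet> D)"
    using adjoint_works[OF has_derivative_linear[OF L], of _ 1] by (auto simp: D_def fun_eq_iff)
  with L show ?thesis using grad_eqI by metis
qed

lemma strictly_convex_on_imp_convex_on:
  assumes "strictly_convex_on S f"
  shows "convex_on S f"
  unfolding convex_on_def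
proof (intro conjI ballI allI impI)
  show "convex S" using assms by (simp add: strictly_convex_on_def)
next
  fix x y and u v :: real assume xy: "x \<in> S" "y \<in> S" and uv: "0 \<le> u" "0 \<le> v" "u + v = 1"
  show "f (u *\<^sub>R x + v *\<^sub>R y) \<le> u * f x + v * f y"
  proof (cases "x = y \<or> u = 0 \<or> v = 0")
    case True
    then show ?thesis using uv
      by (auto simp: algebra_simps simp flip: scaleR_add_left distrib_right)
  next
    case False
    with uv have "0 < u" "u < 1" "v = 1 - u" by auto
    with False xy assms show ?thesis unfolding strictly_convex_on_def by (metis less_imp_le)
  qed
qed

lemma convex_on_line:
  assumes "convex_on UNIV \<psi>"
  shows "convex_on UNIV (\<lambda>u::real. \<psi> (c + u *\<^sub>R d))"
  unfolding convex_on_def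
proof (intro conjI convex_UNIV ballI allI impI)
  fix u1 u2 a b :: real assume ab: "0 \<le> a" "0 \<le> b" "a + b = 1"
  then have "c + (a *\<^sub>R u1 + b *\<^sub>R u2) *\<^sub>R d = a *\<^sub>R (c + u1 *\<^sub>R d) + b *\<^sub>R (c + u2 *\<^sub>R d)"
    by (simp add: algebra_simps flip: scaleR_add_left)
  with assms ab show "\<psi> (c + (a *\<^sub>R u1 + b *\<^sub>R u2) *\<^sub>R d)
      \<le> a * \<psi> (c + u1 *\<^sub>R d) + b * \<psi> (c + u2 *\<^sub>R d)"
    unfolding convex_on_def by simp
qed

lemma convex_on_above_tangent_grad:
  fixes \<psi> :: "'a::euclidean_space \<Rightarrow> real"
  assumes convex: "convex_on UNIV \<psi>" and diff: "\<psi> differentiable (at c)"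
  shows "\<psi> x - \<psi> c \<ge> (x - c) \<bullet> grad \<psi> c"
proof -
  let ?g = "\<lambda>u::real. \<psi> (c + u *\<^sub>R (x - c))"
  have "((\<lambda>u. c + u *\<^sub>R (x - c)) has_derivative (\<lambda>u. u *\<^sub>R (x - c))) (at 0)"
    by (auto intro!: derivative_eq_intros)
  moreover have "(\<psi> has_derivative (\<lambda>h. h \<bullet> grad \<psi> c)) (at (c + 0 *\<^sub>R (x - c)))"
    using has_derivative_grad[OF diff] by simp
  ultimately have "(?g has_derivative (\<lambda>u. (u *\<^sub>R (x - c)) \<bullet> grad \<psi> c)) (at 0)"
    using diff_chain_at by (fastforce simp: o_def)
  then have "(?g has_field_derivative ((x - c) \<bullet> grad \<psi> c)) (at 0 within UNIV)"
    by (simp add: has_field_derivative_def mult.commute[of _ "(x - c) \<bullet> grad \<psi> c"])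
  from convex_on_imp_above_tangent[OF convex_on_line[OF convex] _ _ _ this, of 1]
  show ?thesis by simp
qed

lemma lf_conj_grad:
  fixes \<psi> :: "real ^ 'e \<Rightarrow> real"
  assumes "convex_on UNIV \<psi>" and "\<psi> differentiable (at v)"
  shows "lf_conj \<psi> (grad \<psi> v) = grad \<psi> v \<bullet> v - \<psi> v"
proof -
  have le: "grad \<psi> v \<bullet> w - \<psi> w \<le> grad \<psi> v \<bullet> v - \<psi> v" for w
    using convex_on_above_tangent_grad[OF assms, of w] by (simp add: inner_diff_right inner_commute)
  then have "bdd_above (range (\<lambda>w. grad \<psi> v \<bullet> w - \<psi> w))"
    by (rule bdd_aboveI2)
  then have "grad \<psi> v \<bullet> v - \<psi> v \<le> (SUP w. grad \<psi> v \<bullet> w - \<psi> w)"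
    by (rule cSUP_upper2) auto
  moreover have "(SUP w. grad \<psi> v \<bullet> w - \<psi> w) \<le> grad \<psi> v \<bullet> v - \<psi> v"
    using le by (intro cSUP_least) auto
  ultimately show ?thesis unfolding lf_conj_def by (rule antisym[rotated])
qed

lemma dissipation_fenchel_young_eq:
  assumes "dissipation \<psi>"
  shows "\<psi> v + lf_conj \<psi> (grad \<psi> v) = grad \<psi> v \<bullet> v"
  using assms lf_conj_grad[OF strictly_convex_on_imp_convex_on, of \<psi> v]
  by (simp add: dissipation_def)

lemma inner_matrix_vector_transpose:
  fixes A :: "real ^ 'n ^ 'm"
  shows "(A *v x) \<bullet> y = x \<bullet> (transpose A *v y)"
  using dot_lmul_matrix[of y A x] by (simp add: inner_commute)

lemma has_vector_derivative_bregman: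
  assumes "\<Phi> differentiable (at (\<gamma> s))"
    and "(\<gamma> has_vector_derivative v) (at s within T)"
  shows "((\<lambda>s. bregman \<Phi> (\<gamma> s) y) has_vector_derivative v \<bullet> (grad \<Phi> (\<gamma> s) - grad \<Phi> y))
           (at s within T)"
proof -
  have "((\<lambda>s. \<Phi> (\<gamma> s)) has_derivative (\<lambda>r. (r *\<^sub>R v) \<bullet> grad \<Phi> (\<gamma> s))) (at s within T)"
    using diff_chain_within[OF assms(2)[unfolded has_vector_derivative_def]
        has_derivative_at_withinI[OF has_derivative_grad[OF assms(1)]]]
    by (simp add: o_def)
  then show ?thesis
    using assms(2) unfolding bregman_def has_vector_derivative_def
    by (auto intro!: derivative_eq_intros simp: algebra_simps inner_diff_right)
qed

theorem mainTheorem6: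
  fixes S :: "real ^ 'e ^ 'x"
    and \<Phi> :: "real ^ 'x \<Rightarrow> real"
    and xt :: "real ^ 'x"
    and PsiS :: "real ^ 'x \<Rightarrow> real ^ 'e \<Rightarrow> real"
    and xs :: "real \<Rightarrow> real ^ 'x"
    and x0 :: "real ^ 'x"
    and f :: "real ^ 'x \<Rightarrow> real ^ 'e"
    and j :: "real ^ 'x \<Rightarrow> real ^ 'e"
  assumes S_int: "\<forall>i k. S $ i $ k \<in> \<int>"
    and Phi: "primal_thermo pos_orthant \<Phi>"
    and xt_in: "xt \<in> pos_orthant"
    and diss: "\<forall>x\<in>pos_orthant. dissipation (PsiS x)"
    and f_def: "\<forall>x. f x = transpose S *v (grad \<Phi> x - grad \<Phi> xt)"
    and j_def: "\<forall>x. j x = grad (PsiS x) (f x)"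
    and traj_in: "\<forall>t\<ge>0. xs t \<in> pos_orthant"
    and traj_ode: "\<forall>t\<ge>0. (xs has_vector_derivative (- (S *v j (xs t)))) (at t within {0..})"
    and init: "xs 0 = x0"
    and t_nonneg: "t \<ge> 0"
  shows "((\<lambda>s. PsiS (xs s) (f (xs s)) + lf_conj (PsiS (xs s)) (j (xs s))) has_integral
            (bregman \<Phi> x0 xt - bregman \<Phi> (xs t) xt)) {0..t}
       \<and> ((\<lambda>s. j (xs s) \<bullet> f (xs s)) has_integral
            (bregman \<Phi> x0 xt - bregman \<Phi> (xs t) xt)) {0..t}"
proof -
  have "((\<lambda>s. - bregman \<Phi> (xs s) xt) has_vector_derivative j (xs s) \<bullet> f (xs s)) (at s within {0..t})"
    if s: "s \<in> {0..t}" for s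
  proof -
    have "\<Phi> differentiable (at (xs s))"
      using Phi traj_in s unfolding primal_thermo_def by auto
    moreover have "(xs has_vector_derivative - (S *v j (xs s))) (at s within {0..t})"
      using traj_ode s by (auto intro: has_vector_derivative_within_subset)
    ultimately have "((\<lambda>s. bregman \<Phi> (xs s) xt) has_vector_derivative
        - (S *v j (xs s)) \<bullet> (grad \<Phi> (xs s) - grad \<Phi> xt)) (at s within {0..t})"
      by (rule has_vector_derivative_bregman)
    moreover have "(S *v j (xs s)) \<bullet> (grad \<Phi> (xs s) - grad \<Phi> xt) = j (xs s) \<bullet> f (xs s)"
      using f_def by (simp add: inner_matrix_vector_transpose)
    ultimately show ?thesis
      using has_vector_derivative_minus by fastforce
  qed
  from fundamental_theorem_of_calculus[OF t_nonneg this]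
  have production: "((\<lambda>s. j (xs s) \<bullet> f (xs s)) has_integral
      (bregman \<Phi> x0 xt - bregman \<Phi> (xs t) xt)) {0..t}"
    using init by simp
  have "PsiS (xs s) (f (xs s)) + lf_conj (PsiS (xs s)) (j (xs s)) = j (xs s) \<bullet> f (xs s)"
    if "s \<in> {0..t}" for s
    using dissipation_fenchel_young_eq[of "PsiS (xs s)" "f (xs s)"] diss traj_in that j_def
    by (auto simp: inner_commute)
  with production show ?thesis
    by (metis (no_types, lifting) has_integral_eq)
qed

end
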